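(* Let $d\geq 1$ and let $\lambda=(\lambda_1,\dots,\lambda_d)$ be a partition of length at most $d$ (i.e. integers $\lambda_1\geq\lambda_2\geq\dots\geq\lambda_d\geq 0$). Then the factorial Grothendieck polynomial $G_\lambda(x|b)$ satisfies \[ G_{\lambda}(x|b) = \det\left(\sum_{s\geq 0} \binom{i-d}{s} \beta^s\,G_{\lambda_i+j-i+s}^{(\lambda_i+d-i)}(x|b)\right)_{1\leq i,j\leq d} = \det\left(\sum_{s\geq 0} \binom{i-j}{s} \beta^s\,G_{\lambda_i+j-i+s}^{(\lambda_i+d-i)}(x|b)\right)_{1\leq i,j\leq d}. \] In particular, for every integer $k\geq 0$, $G_{(k,0,\dots,0)}(x|b) = G_k^{(k+d-1)}(x|b)$.
   Context: Let $x=(x_1,\dots,x_d)$ and $b=(b_1,b_2,\dots)$ be sets of indeterminates and $\beta$ a further formal variable (of degree $-1$); all expressions live in the ring $\mathbb{Z}[\beta,b_1,b_2,\dots][[x_1,\dots,x_d]]$. For variables $x,y$ set $x\oplus y:=x+y+\beta xy$ and $[y|b]^k:=(y\oplus b_1)(y\oplus b_2)\cdots(y\oplus b_k)$ for $k\geq 0$. For a partition $\lambda$ of length at most $d$, the factorial Grothendieck polynomial is \[ G_{\lambda}(x|b) =\frac{\det\left([x_j|b]^{\lambda_i+d-i}(1+\beta x_j)^{i-1}\right)_{1\leq i,j\leq d}}{\prod_{1\leq i<j\leq d}(x_i-x_j)} \] (this bi-alternant expression agrees with McNamara's definition via set-valued tableaux). For each integer $k\geq 0$ define $G_m^{(k)}(x|b)$,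 $m\in\mathbb{Z}$, by the generating function \[ \sum_{m\in\mathbb{Z}} G_m^{(k)}(x|b)\,u^m := \frac{1}{1+\beta u^{-1}}\prod_{i=1}^d\frac{1+\beta x_i}{1- x_i u} \prod_{j=1}^{k} \bigl(1+ (u+\beta)b_j\bigr), \] where $\frac{1}{1+\beta u^{-1}}$ is expanded as $\sum_{s\geq 0}(-1)^s\beta^s u^{-s}$ and $\frac{1}{1-x_iu}=\sum_{n\ge0}x_i^nu^n$. The binomial coefficients are generalized: for $n\in\mathbb{Z}$, $\binom{n}{i}$ is defined by $(1+x)^n=\sum_{i\geq0}\binom{n}{i}x^i$, with $\binom{n}{-i}=0$ for integers $i>0$. *)

theory Defs
  imports "HOL-Library.Poly_Mapping" "HOL-Computational_Algebra.Formal_Power_Series"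
          "Jordan_Normal_Form.Determinant"
begin

datatype var = XV nat | BV nat | BetaV

(* Z[beta, b_1, b_2, ..., x_1, x_2, ...]: polynomials with integer coefficients
   in the indeterminates above (monomials = finitely supported exponent maps). *)
type_synonym pol = "(var \<Rightarrow>\<^sub>0 nat) \<Rightarrow>\<^sub>0 int"

(* The ambient ring Z[beta,b][[x_1,...,x_d]] is realised inside pol[[t]] via the
   injective ring homomorphism x_i |-> t * x_i (t a grading variable, beta and
   b_j constants).  Infinite sums are taken w.r.t. the t-adic topology of fps,
   which restricts to the x-adic topology on the image. *)
type_synonym ser = "pol fps"

definition indet :: "var \<Rightarrow> ser" where
  "indet v = fps_const (Poly_Mapping.single (Poly_Mapping.single v 1) 1)"

definition xx :: "nat \<Rightarrow> ser" where "xx i = fps_X * indet (XV i)"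
definition bb :: "nat \<Rightarrow> ser" where "bb j = indet (BV j)"
definition bet :: ser where "bet = indet BetaV"

definition oplus :: "ser \<Rightarrow> ser \<Rightarrow> ser" where "oplus x y = x + y + bet * x * y"

definition fpow :: "ser \<Rightarrow> nat \<Rightarrow> ser" where
  "fpow y k = (\<Prod>l=1..k. oplus y (bb l))"

definition vdm :: "nat \<Rightarrow> ser" where
  "vdm d = (\<Prod>(i,j)\<in>{(i,j). 1 \<le> i \<and> i < j \<and> j \<le> d}. xx i - xx j)"

(* Numerator of the bi-alternant; rows i, columns j (1-based i = r+1, j = c+1) *)
definition galt :: "nat \<Rightarrow> (nat \<Rightarrow> nat) \<Rightarrow> ser" where
  "galt d lam = det (mat d d (\<lambda>(r,c). fpow (xx (c+1)) (lam (r+1) + d - (r+1))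
                                        * (1 + bet * xx (c+1)) ^ r))"

definition Gfact :: "nat \<Rightarrow> (nat \<Rightarrow> nat) \<Rightarrow> ser" where
  "Gfact d lam = (THE g. vdm d * g = galt d lam)"

definition genP :: "nat \<Rightarrow> nat \<Rightarrow> ser fps" where
  "genP d k = (\<Prod>i=1..d. fps_const (1 + bet * xx i) * Abs_fps (\<lambda>n. xx i ^ n))
              * (\<Prod>j=1..k. 1 + (fps_X + fps_const bet) * fps_const (bb j))"

definition coeffU :: "ser fps \<Rightarrow> int \<Rightarrow> ser" where
  "coeffU P n = (if n < 0 then 0 else fps_nth P (nat n))"

(* G_m^{(k)}(x|b): coefficient of u^m in (sum_s (-beta)^s u^{-s}) * genP d k *)
definition Gmk :: "nat \<Rightarrow> nat \<Rightarrow> int \<Rightarrow> ser" where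
  "Gmk d k m = suminf (\<lambda>s. (- bet) ^ s * coeffU (genP d k) (m + int s))"

(* generalized binomial coefficient binom(n,s), n \<in> Z: coefficient of x^s in (1+x)^n *)
definition gbin :: "int \<Rightarrow> nat \<Rightarrow> int" where
  "gbin n s = (if 0 \<le> n then int (nat n choose s)
                else (-1) ^ s * int ((nat (- n) + s - 1) choose s))"
(* for n = -m < 0:  (1+x)^(-m) = sum_s (-1)^s binom(m+s-1, s) x^s *)

end

theory Submission
  imports Defs
begin

(* Write sum_s binom(a,s) beta^s [u^(N+s)] P(u) as the coefficient of u^N in (1 + beta/u)^a P(u).
   Then G_m^(k) is such a coefficient of P_k(u) = prod_i (1 + beta x_i)/(1 - x_i u) *
   prod_(j<=k) (1 + (u + beta) b_j) with a = -1, and so is every entry of both matrices.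
   Multiplying the first matrix from the right by the matrix with entries
   (1 + beta x_p)^d [u^(d-1-c)] prod_(q<>p) (1 - x_q u) clears all poles of P_k except the one at
   1/x_p, while the binomial twist contributes (1 + beta x_p)^(i-1-d); so entry (i,p) becomes
   prod_q (1 + beta x_q) [x_p|b]^(lambda_i+d-i) (1 + beta x_p)^(i-1), a row of the bi-alternant.
   The same multiplication applied to the triangular Toeplitz matrix of P_0 shows that the
   multiplier has determinant prod_q (1 + beta x_q)^d times the Vandermonde product.  The second
   matrix is the first times a unitriangular matrix of generalized binomials (Vandermonde
   convolution).  For a one-row partition it is upper triangular, and G_0^(k) = 1 because it is
   P_k evaluated at u = -beta. *)

(* Any linear order on the indeterminates makes pol, hence ser, an integral domain (Poly_Mapping),
   which is what allows cancelling the Vandermonde product in the definition of Gfact. *)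
fun var_index :: "var \<Rightarrow> nat" where
  "var_index BetaV = 0" | "var_index (XV n) = 2 * n + 1" | "var_index (BV n) = 2 * n + 2"

lemma inj_var_index: "inj var_index"
proof (rule injI)
  fix a b show "var_index a = var_index b \<Longrightarrow> a = b"
    by (cases a; cases b) (simp_all, presburger+)
qed

instantiation var :: linorder
begin
definition "less_eq_var a b \<longleftrightarrow> var_index a \<le> var_index b"
definition "less_var a b \<longleftrightarrow> var_index a < var_index b"
instance
  by standard (auto simp: less_eq_var_def less_var_def intro: injD[OF inj_var_index])
end


section \<open>Series of formal power series with growing order\<close>

definition fps_order_ge :: "int \<Rightarrow> 'a::zero fps \<Rightarrow> bool" where
  "fps_order_ge n f \<longleftrightarrow> (\<forall>m. int m < n \<longrightarrow> fps_nth f m = 0)"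

(* Such a series converges X-adically, and coefficient m of its sum only involves the terms s \<le> m + K. *)
definition order_grows :: "int \<Rightarrow> (nat \<Rightarrow> 'a::zero fps) \<Rightarrow> bool" where
  "order_grows K f \<longleftrightarrow> (\<forall>s. fps_order_ge (int s - K) (f s))"

lemma fps_order_ge_nonpos: "n \<le> 0 \<Longrightarrow> fps_order_ge n f"
  by (auto simp: fps_order_ge_def)

lemma fps_order_ge_mono: "fps_order_ge n f \<Longrightarrow> k \<le> n \<Longrightarrow> fps_order_ge k f"
  by (auto simp: fps_order_ge_def)

lemma fps_order_ge_0 [simp]: "fps_order_ge n 0"
  by (simp add: fps_order_ge_def)

lemma fps_order_ge_sum:
  "(\<And>i. i \<in> A \<Longrightarrow> fps_order_ge n (f i)) \<Longrightarrow> fps_order_ge n (sum f A :: 'a::comm_monoid_add fps)"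
  by (induct A rule: infinite_finite_induct) (auto simp: fps_order_ge_def)

lemma fps_order_ge_mult:
  assumes "fps_order_ge a f" "fps_order_ge b (g :: 'a::comm_ring_1 fps)"
  shows "fps_order_ge (a + b) (f * g)"
  unfolding fps_order_ge_def fps_mult_nth
proof (intro allI impI sum.neutral ballI)
  fix m i assume "int m < a + b" "i \<in> {0..m}"
  then have "int i < a \<or> int (m - i) < b" by auto
  then show "fps_nth f i * fps_nth g (m - i) = 0"
    using assms unfolding fps_order_ge_def by auto
qed

lemma fps_order_ge_mult_left: "fps_order_ge a f \<Longrightarrow> fps_order_ge a (c * f :: 'a::comm_ring_1 fps)"
  using fps_order_ge_mult[of 0 c a f] by (simp add: fps_order_ge_nonpos)

lemma fps_order_ge_mult_right: "fps_order_ge a f \<Longrightarrow> fps_order_ge a (f * c :: 'a::comm_ring_1 fps)"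
  using fps_order_ge_mult_left[of a f c] by (simp add: mult.commute)

lemma fps_order_ge_power:
  "fps_order_ge a f \<Longrightarrow> fps_order_ge (int n * a) (f ^ n :: 'a::comm_ring_1 fps)"
  by (induct n) (auto simp: fps_order_ge_nonpos algebra_simps dest: fps_order_ge_mult)

lemma order_grows_sums:
  assumes "order_grows K f"
  shows "f sums Abs_fps (\<lambda>m. \<Sum>s<nat (int m + K) + 1. fps_nth (f s) m)"
  unfolding sums_def
proof (rule tendsto_fpsI, rule eventually_sequentiallyI)
  fix m n assume n: "nat (int m + K) + 1 \<le> n"
  have "fps_nth (sum f {..<n}) m = (\<Sum>s<n. fps_nth (f s) m)" by (simp add: fps_sum_nth)
  also have "\<dots> = (\<Sum>s<nat (int m + K) + 1. fps_nth (f s) m)"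
    by (rule sum.mono_neutral_right) (use n assms in \<open>auto simp: order_grows_def fps_order_ge_def\<close>)
  finally show "fps_nth (sum f {..<n}) m = fps_nth (Abs_fps (\<lambda>m. \<Sum>s<nat (int m + K) + 1. fps_nth (f s) m)) m"
    by simp
qed

lemma order_grows_suminf_nth:
  assumes "order_grows K f" "int m + K < int L"
  shows "fps_nth (suminf f) m = (\<Sum>s<L. fps_nth (f s) m)"
proof -
  have "fps_nth (suminf f) m = (\<Sum>s<nat (int m + K) + 1. fps_nth (f s) m)"
    using sums_unique[OF order_grows_sums[OF assms(1)], symmetric] by simp
  also have "\<dots> = (\<Sum>s<L. fps_nth (f s) m)"
    by (rule sum.mono_neutral_cong) (use assms in \<open>auto simp: order_grows_def fps_order_ge_def\<close>)
  finally show ?thesis .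
qed

lemma order_grows_mono: "order_grows K f \<Longrightarrow> K \<le> K' \<Longrightarrow> order_grows K' f"
  unfolding order_grows_def by (meson fps_order_ge_mono diff_left_mono)

lemma order_grows_mult_left:
  "order_grows K f \<Longrightarrow> order_grows K (\<lambda>s. c s * f s :: 'a::comm_ring_1 fps)"
  unfolding order_grows_def by (auto intro: fps_order_ge_mult_left)

lemma order_grows_mult_right:
  "order_grows K f \<Longrightarrow> order_grows K (\<lambda>s. f s * c s :: 'a::comm_ring_1 fps)"
  unfolding order_grows_def by (auto intro: fps_order_ge_mult_right)

lemma order_grows_sum:
  "(\<And>j. j \<in> J \<Longrightarrow> order_grows K (f j)) \<Longrightarrow> order_grows K (\<lambda>s. \<Sum>j\<in>J. f j s :: 'a::comm_ring_1 fps)"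
  unfolding order_grows_def by (auto intro: fps_order_ge_sum)

lemma fps_order_ge_suminf:
  "order_grows K f \<Longrightarrow> (\<And>s. fps_order_ge n (f s)) \<Longrightarrow> fps_order_ge n (suminf f :: 'a::comm_ring_1 fps)"
  unfolding fps_order_ge_def
proof (intro allI impI)
  fix m assume "order_grows K f" "\<And>s. \<forall>m. int m < n \<longrightarrow> fps_nth (f s) m = 0" "int m < n"
  then show "fps_nth (suminf f) m = 0"
    by (subst order_grows_suminf_nth[where L = "nat (int m + K) + 1"]) auto
qed

lemma suminf_eq_sum_lessThan:
  "(\<And>s. L \<le> s \<Longrightarrow> f s = 0) \<Longrightarrow> suminf f = (\<Sum>s<L. f s :: 'a::{comm_monoid_add, t2_space})"
  by (rule suminf_finite) (auto simp: not_less)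

lemma suminf_fps_mult_left:
  assumes "order_grows K f"
  shows "c * suminf f = suminf (\<lambda>s. c * f s :: 'a::comm_ring_1 fps)"
proof (rule fps_ext)
  fix m
  define L where "L = nat (int m + K) + 1"
  have "fps_nth (c * suminf f) m = (\<Sum>i=0..m. fps_nth c i * (\<Sum>s<L. fps_nth (f s) (m - i)))"
    unfolding fps_mult_nth
    by (intro sum.cong refl, subst order_grows_suminf_nth[OF assms, where L = L]) (auto simp: L_def)
  also have "\<dots> = (\<Sum>s<L. fps_nth (c * f s) m)"
    by (simp add: fps_mult_nth sum_distrib_left sum.swap[of _ "{0..m}"])
  also have "\<dots> = fps_nth (suminf (\<lambda>s. c * f s)) m"
    by (rule order_grows_suminf_nth[OF order_grows_mult_left[OF assms], symmetric]) (auto simp: L_def)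
  finally show "fps_nth (c * suminf f) m = fps_nth (suminf (\<lambda>s. c * f s)) m" .
qed

lemma suminf_fps_mult_right:
  "order_grows K f \<Longrightarrow> suminf f * c = suminf (\<lambda>s. f s * c :: 'a::comm_ring_1 fps)"
  using suminf_fps_mult_left[of K f c] by (simp add: mult.commute)

lemma suminf_fps_sum:
  assumes "finite J" "\<And>j. j \<in> J \<Longrightarrow> order_grows K (f j)"
  shows "suminf (\<lambda>s. \<Sum>j\<in>J. f j s) = (\<Sum>j\<in>J. suminf (f j) :: 'a::comm_ring_1 fps)"
proof (rule fps_ext)
  fix m
  define L where "L = nat (int m + K) + 1"
  have "fps_nth (suminf (\<lambda>s. \<Sum>j\<in>J. f j s)) m = (\<Sum>s<L. fps_nth (\<Sum>j\<in>J. f j s) m)"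
    by (rule order_grows_suminf_nth[OF order_grows_sum]) (use assms in \<open>auto simp: L_def\<close>)
  also have "\<dots> = (\<Sum>s<L. \<Sum>j\<in>J. fps_nth (f j s) m)"
    by (simp add: fps_sum_nth)
  also have "\<dots> = (\<Sum>j\<in>J. fps_nth (suminf (f j)) m)"
    by (subst sum.swap, intro sum.cong refl order_grows_suminf_nth[symmetric])
       (use assms in \<open>auto simp: L_def\<close>)
  finally show "fps_nth (suminf (\<lambda>s. \<Sum>j\<in>J. f j s)) m = fps_nth (\<Sum>j\<in>J. suminf (f j)) m"
    by (simp add: fps_sum_nth)
qed

lemma suminf_fps_diagonal:
  fixes w :: "nat \<Rightarrow> nat \<Rightarrow> 'a::comm_ring_1 fps"
  assumes w: "\<And>s r. fps_order_ge (int s + int r - K) (w s r)"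
  shows "suminf (\<lambda>s. suminf (w s)) = suminf (\<lambda>n. \<Sum>s\<le>n. w s (n - s))"
proof (rule fps_ext)
  fix m
  define L where "L = nat (int m + K) + 1"
  have inner: "order_grows (K - int s) (w s)" for s
    unfolding order_grows_def using w by (metis add.commute diff_diff_eq2)
  have outer: "order_grows K (\<lambda>s. suminf (w s))"
    unfolding order_grows_def
    by (intro allI fps_order_ge_suminf[OF inner] fps_order_ge_mono[OF w]) simp
  have diagonal: "order_grows K (\<lambda>n. \<Sum>s\<le>n. w s (n - s))"
    unfolding order_grows_def
  proof (intro allI fps_order_ge_sum)
    fix n :: nat and i assume "i \<in> {..n}"
    then show "fps_order_ge (int n - K) (w i (n - i))" using w[of i "n - i"] by (simp add: of_nat_diff)
  qed
  have vanish: "fps_nth (w s r) m = 0" if "L \<le> s + r" for s r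
    using w[of s r] that unfolding fps_order_ge_def L_def by auto
  have "fps_nth (suminf (\<lambda>s. suminf (w s))) m = (\<Sum>s<L. fps_nth (suminf (w s)) m)"
    by (rule order_grows_suminf_nth[OF outer]) (auto simp: L_def)
  also have "\<dots> = (\<Sum>s<L. \<Sum>r<L. fps_nth (w s r) m)"
    by (intro sum.cong refl order_grows_suminf_nth[OF inner]) (auto simp: L_def)
  also have "\<dots> = (\<Sum>(s, r)\<in>{(s, r). s + r < L}. fps_nth (w s r) m)"
    by (subst sum.cartesian_product, rule sum.mono_neutral_right) (auto, metis not_le vanish)
  also have "\<dots> = (\<Sum>n<L. \<Sum>s\<le>n. fps_nth (w s (n - s)) m)"
    by (rule sum.triangle_reindex)
  also have "\<dots> = fps_nth (suminf (\<lambda>n. \<Sum>s\<le>n. w s (n - s))) m"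
    by (subst order_grows_suminf_nth[OF diagonal, where L = L]) (auto simp: L_def fps_sum_nth)
  finally show "fps_nth (suminf (\<lambda>s. suminf (w s))) m = fps_nth (suminf (\<lambda>n. \<Sum>s\<le>n. w s (n - s))) m" .
qed

lemma suminf_fps_cauchy:
  fixes f g :: "nat \<Rightarrow> 'a::comm_ring_1 fps"
  assumes "order_grows K1 f" "order_grows K2 g"
  shows "suminf f * suminf g = suminf (\<lambda>n. \<Sum>s\<le>n. f s * g (n - s))"
proof -
  have "suminf f * suminf g = suminf (\<lambda>s. f s * suminf g)"
    by (rule suminf_fps_mult_right[OF assms(1)])
  also have "\<dots> = suminf (\<lambda>s. suminf (\<lambda>r. f s * g r))"
    by (simp add: suminf_fps_mult_left[OF assms(2)])
  also have "\<dots> = suminf (\<lambda>n. \<Sum>s\<le>n. f s * g (n - s))"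
    by (rule suminf_fps_diagonal[where K = "K1 + K2"])
       (use fps_order_ge_mult assms in \<open>fastforce simp: order_grows_def algebra_simps\<close>)
  finally show ?thesis .
qed


section \<open>Generalized binomial coefficients\<close>

lemma gbin_pascal: "gbin a (Suc n) = gbin (a - 1) (Suc n) + gbin (a - 1) n"
proof (cases "a \<ge> 1")
  case True
  define m where "m = nat (a - 1)"
  have m: "nat a = Suc m" "nat (a - 1) = m" using True by (auto simp: m_def)
  then show ?thesis using True by (simp add: gbin_def)
next
  case False
  show ?thesis
  proof (cases "a = 0")
    case True
    then show ?thesis by (simp add: gbin_def)
  next
    case False
    define m where "m = nat (- a)"
    have m: "a = - int m" "m \<ge> 1" using False \<open>\<not> a \<ge> 1\<close> by (auto simp: m_def)
    have n1: "nat (- a) = m" "nat (- (a - 1)) = m + 1" using m by auto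
    have ch: "(m + n choose Suc n) + (m + n choose n) = (Suc (m + n) choose Suc n)" by simp
    have "gbin (a - 1) (Suc n) + gbin (a - 1) n
          = (-1) ^ Suc n * int (Suc (m + n) choose Suc n) + (-1) ^ n * int (m + n choose n)"
      using m n1 by (simp add: gbin_def)
    also have "\<dots> = (-1) ^ Suc n * int (m + n choose Suc n)"
      by (subst ch[symmetric]) (simp add: algebra_simps)
    also have "\<dots> = gbin a (Suc n)" using m n1 \<open>m \<ge> 1\<close> by (simp add: gbin_def)
    finally show ?thesis ..
  qed
qed

lemma gbin_0_right [simp]: "gbin a 0 = 1"
  by (simp add: gbin_def)

lemma gbin_eq_0: "0 \<le> a \<Longrightarrow> a < int n \<Longrightarrow> gbin a n = 0"
  by (simp add: gbin_def)

lemma gbin_0_left: "gbin 0 n = (if n = 0 then 1 else 0)"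
  by (simp add: gbin_def)

lemma gbin_minus_1: "gbin (- 1) n = (- 1) ^ n"
  by (simp add: gbin_def)

definition gbin_fps :: "int \<Rightarrow> int fps" where
  "gbin_fps a = Abs_fps (gbin a)"

lemma gbin_fps_eq: "gbin_fps a = (1 + fps_X) * gbin_fps (a - 1)"
proof (rule fps_ext)
  fix n show "fps_nth (gbin_fps a) n = fps_nth ((1 + fps_X) * gbin_fps (a - 1)) n"
  proof (cases n)
    case 0 then show ?thesis by (simp add: gbin_fps_def distrib_right)
  next
    case (Suc k)
    have "fps_nth ((1 + fps_X) * gbin_fps (a - 1)) n = gbin (a - 1) (Suc k) + gbin (a - 1) k"
      by (simp add: Suc gbin_fps_def distrib_right)
    also have "\<dots> = fps_nth (gbin_fps a) n" by (simp add: Suc gbin_fps_def gbin_pascal[of a k])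
    finally show ?thesis ..
  qed
qed

lemma gbin_fps_add_nat: "gbin_fps (c + int n) = (1 + fps_X) ^ n * gbin_fps c"
proof (induct n)
  case (Suc n)
  then show ?case using gbin_fps_eq[of "c + int (Suc n)"] by simp
qed simp

lemma gbin_fps_nonneg: "0 \<le> c \<Longrightarrow> gbin_fps c = (1 + fps_X) ^ nat c"
proof -
  have "gbin_fps 0 = 1" by (rule fps_ext) (simp add: gbin_fps_def gbin_0_left)
  then show "0 \<le> c \<Longrightarrow> ?thesis" using gbin_fps_add_nat[of 0 "nat c"] by simp
qed

lemma gbin_fps_mult: "gbin_fps a * gbin_fps b = gbin_fps (a + b)"
proof -
  define m1 where "m1 = nat (- a)"
  define m2 where "m2 = nat (- b)"
  let ?u = "1 + fps_X :: int fps"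
  have "fps_nth (?u ^ (m1 + m2)) 0 = 1"
    by (simp add: startsby_power)
  then have nonzero: "?u ^ (m1 + m2) \<noteq> 0"
    by (metis fps_zero_nth zero_neq_one)
  have "?u ^ (m1 + m2) * (gbin_fps a * gbin_fps b) = gbin_fps (a + int m1) * gbin_fps (b + int m2)"
    by (simp add: gbin_fps_add_nat power_add algebra_simps)
  also have "\<dots> = ?u ^ nat ((a + b) + int (m1 + m2))"
    by (simp add: gbin_fps_nonneg m1_def m2_def flip: power_add nat_add_distrib)
  also have "\<dots> = ?u ^ (m1 + m2) * gbin_fps (a + b)"
    by (simp add: gbin_fps_nonneg m1_def m2_def flip: gbin_fps_add_nat)
  finally show ?thesis
    using mult_left_cancel[OF nonzero] by blast
qed

lemma gbin_add: "gbin (a + b) n = (\<Sum>s\<le>n. gbin a s * gbin b (n - s))"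
  using arg_cong[OF gbin_fps_mult[of a b], of "\<lambda>f. fps_nth f n"]
  by (simp add: fps_mult_nth gbin_fps_def atLeast0AtMost)


section \<open>Twisted coefficients\<close>

(* the coefficient of u^N in (1 + beta/u)^a P(u); the coefficient of u^n is 0 for n < 0 *)
definition twisted_coeff :: "ser fps \<Rightarrow> int \<Rightarrow> int \<Rightarrow> ser" where
  "twisted_coeff P a N = suminf (\<lambda>n. of_int (gbin a n) * bet ^ n * coeffU P (N + int n))"

lemma Gmk_eq_twisted_coeff: "Gmk d k m = twisted_coeff (genP d k) (- 1) m"
proof -
  have "(- bet) ^ s = (of_int (gbin (- 1) s) * bet ^ s :: ser)" for s
    by (simp add: gbin_minus_1 power_minus[of bet])
  then show ?thesis
    unfolding Gmk_def twisted_coeff_def by simp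
qed

lemma fps_order_ge_coeffU:
  assumes "order_grows K (fps_nth P)"
  shows "fps_order_ge (M - K) (coeffU P M)"
proof (cases "M < 0")
  case False
  from assms have "fps_order_ge (int (nat M) - K) (fps_nth P (nat M))"
    unfolding order_grows_def by blast
  then show ?thesis using False by (simp add: coeffU_def)
qed (simp add: coeffU_def fps_order_ge_def)

lemma order_grows_coeffU_shift:
  assumes "order_grows K (fps_nth P)"
  shows "order_grows (K - N) (\<lambda>n. c n * coeffU P (N + int n))"
  unfolding order_grows_def
proof (intro allI fps_order_ge_mult_left)
  fix s show "fps_order_ge (int s - (K - N)) (coeffU P (N + int s))"
    using fps_order_ge_coeffU[OF assms, of "N + int s"] by (simp add: algebra_simps)
qed

lemma twisted_coeff_gbin_sum:
  assumes P: "order_grows K (fps_nth P)"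
  shows "suminf (\<lambda>s. of_int (gbin a s) * bet ^ s * twisted_coeff P b (N + int s)) = twisted_coeff P (a + b) N"
proof -
  define w where "w s r = of_int (gbin a s) * bet ^ s * (of_int (gbin b r) * bet ^ r * coeffU P (N + int s + int r))" for s r
  have "suminf (\<lambda>s. of_int (gbin a s) * bet ^ s * twisted_coeff P b (N + int s)) = suminf (\<lambda>s. suminf (w s))"
    unfolding twisted_coeff_def w_def
    by (intro arg_cong[where f = suminf] ext suminf_fps_mult_left[OF order_grows_coeffU_shift[OF P]])
  also have "\<dots> = suminf (\<lambda>n. \<Sum>s\<le>n. w s (n - s))"
    by (rule suminf_fps_diagonal[where K = "K - N"])
       (unfold w_def, intro fps_order_ge_mult_left fps_order_ge_mono[OF fps_order_ge_coeffU[OF P]], simp)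
  also have "\<dots> = suminf (\<lambda>n. of_int (gbin (a + b) n) * bet ^ n * coeffU P (N + int n))"
  proof (intro arg_cong[where f = suminf] ext)
    fix n
    have "w s (n - s) = of_int (gbin a s * gbin b (n - s)) * bet ^ n * coeffU P (N + int n)" if "s \<le> n" for s
    proof -
      have "N + int s + int (n - s) = N + int n" "bet ^ s * bet ^ (n - s) = (bet ^ n :: ser)"
        using that by (auto simp: of_nat_diff simp flip: power_add)
      then show ?thesis
        unfolding w_def by (metis (no_types, lifting) mult.assoc mult.left_commute of_int_mult)
    qed
    then show "(\<Sum>s\<le>n. w s (n - s)) = of_int (gbin (a + b) n) * bet ^ n * coeffU P (N + int n)"
      by (simp add: gbin_add sum_distrib_right)
  qed
  finally show ?thesis unfolding twisted_coeff_def .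
qed

section \<open>The generating series\<close>

definition beta_prod :: "nat \<Rightarrow> ser" where "beta_prod d = (\<Prod>q=1..d. 1 + bet * xx q)"
definition geom_fps :: "ser \<Rightarrow> ser fps" where "geom_fps x = Abs_fps (\<lambda>n. x ^ n)"
definition b_poly :: "nat \<Rightarrow> ser fps" where
  "b_poly k = (\<Prod>j=1..k. 1 + (fps_X + fps_const bet) * fps_const (bb j))"
definition omit_poly :: "nat \<Rightarrow> nat \<Rightarrow> ser fps" where
  "omit_poly d p = (\<Prod>q\<in>{1..d} - {p}. 1 - fps_const (xx q) * fps_X)"

lemma fps_order_ge_xx: "fps_order_ge 1 (xx i)"
  unfolding fps_order_ge_def xx_def by simp

lemma fps_const_prod: "fps_const (prod f S) = (\<Prod>i\<in>S. fps_const (f i) :: 'a::comm_ring_1 fps)"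
  by (induct S rule: infinite_finite_induct) (auto simp: fps_const_mult[symmetric])

lemma fps_nth_prod_0: "fps_nth (prod f S) 0 = (\<Prod>i\<in>S. fps_nth (f i :: 'a::comm_ring_1 fps) 0)"
  by (induct S rule: infinite_finite_induct) auto

lemma fps_mult_nth_eq_0:
  fixes f g :: "'a::comm_ring_1 fps"
  assumes "\<And>n. a < n \<Longrightarrow> fps_nth f n = 0" "\<And>n. b < n \<Longrightarrow> fps_nth g n = 0" "a + b < n"
  shows "fps_nth (f * g) n = 0"
  unfolding fps_mult_nth
proof (rule sum.neutral, intro ballI)
  fix i assume "i \<in> {0..n}"
  then have "a < i \<or> b < n - i" using assms(3) by auto
  then show "fps_nth f i * fps_nth g (n - i) = 0" using assms(1,2) by auto
qed

lemma fps_prod_nth_eq_0: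
  fixes f :: "'b \<Rightarrow> 'a::comm_ring_1 fps"
  assumes "finite S" "\<And>q n. q \<in> S \<Longrightarrow> 1 < n \<Longrightarrow> fps_nth (f q) n = 0"
  shows "card S < n \<Longrightarrow> fps_nth (prod f S) n = 0"
  using assms
proof (induct S arbitrary: n rule: finite_induct)
  case empty then show ?case by simp
next
  case (insert x F)
  show ?case
    unfolding prod.insert[OF insert(1,2)]
    by (rule fps_mult_nth_eq_0[of 1 _ "card F"]) (use insert in auto)
qed

lemma geom_fps_inverse: "geom_fps x * (1 - fps_const x * fps_X) = 1"
proof (rule fps_ext)
  fix n
  have e: "geom_fps x * (1 - fps_const x * fps_X) = geom_fps x - fps_X * (fps_const x * geom_fps x)"
    by (simp add: algebra_simps)
  show "fps_nth (geom_fps x * (1 - fps_const x * fps_X)) n = fps_nth 1 n"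
    unfolding e by (cases n) (simp_all add: geom_fps_def)
qed

lemma genP_factors: "genP d k = (\<Prod>i=1..d. fps_const (1 + bet * xx i) * geom_fps (xx i)) * b_poly k"
  unfolding genP_def geom_fps_def b_poly_def ..

lemma genP_eq_beta_prod: "genP d k = fps_const (beta_prod d) * (\<Prod>q=1..d. geom_fps (xx q)) * b_poly k"
  unfolding genP_factors beta_prod_def by (simp add: prod.distrib fps_const_prod)

lemma genP_mult_omit_poly:
  assumes "p \<in> {1..d}"
  shows "genP d k * omit_poly d p = fps_const (beta_prod d) * geom_fps (xx p) * b_poly k"
proof -
  have "(\<Prod>q=1..d. geom_fps (xx q)) = geom_fps (xx p) * (\<Prod>q\<in>{1..d} - {p}. geom_fps (xx q))"
    using assms by (simp add: prod.remove)
  moreover have "(\<Prod>q\<in>{1..d} - {p}. geom_fps (xx q)) * omit_poly d p = 1"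
    unfolding omit_poly_def prod.distrib[symmetric] geom_fps_inverse by simp
  ultimately show ?thesis
    unfolding genP_eq_beta_prod by (simp add: algebra_simps)
qed

lemma omit_poly_nth_eq_0:
  assumes "p \<in> {1..d}" "d \<le> r"
  shows "fps_nth (omit_poly d p) r = 0"
  unfolding omit_poly_def
proof (rule fps_prod_nth_eq_0)
  show "card ({1..d} - {p}) < r" using assms by auto
  show "fps_nth (1 - fps_const (xx q) * fps_X) n = 0" if "1 < n" for q n
    using that by (simp add: mult.commute[of _ fps_X])
qed simp

lemma b_poly_nth_eq_0: "k < l \<Longrightarrow> fps_nth (b_poly k) l = 0"
  unfolding b_poly_def
  by (rule fps_prod_nth_eq_0) (auto simp: algebra_simps)

lemma geom_fps_mult_nth:
  assumes "\<And>l. k < l \<Longrightarrow> fps_nth F l = 0"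
  shows "fps_nth (geom_fps x * F) (k + n) = x ^ n * (\<Sum>l\<le>k. fps_nth F l * x ^ (k - l))"
proof -
  have "fps_nth (geom_fps x * F) (k + n) = (\<Sum>i=0..k+n. fps_nth F i * x ^ (k + n - i))"
    by (subst mult.commute) (simp add: fps_mult_nth geom_fps_def)
  also have "\<dots> = (\<Sum>i\<le>k. fps_nth F i * x ^ (k + n - i))"
    by (rule sum.mono_neutral_right) (use assms in auto)
  also have "\<dots> = (\<Sum>i\<le>k. x ^ n * (fps_nth F i * x ^ (k - i)))"
    by (intro sum.cong refl) (auto simp: power_add[symmetric] algebra_simps Nat.add_diff_assoc2)
  finally show ?thesis by (simp add: sum_distrib_left)
qed


lemma b_poly_Suc:
  "b_poly (Suc k) = b_poly k * (fps_const (1 + bet * bb (Suc k)) + fps_X * fps_const (bb (Suc k)))"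
  unfolding b_poly_def by (simp add: algebra_simps flip: fps_const_add fps_const_mult)

lemma fpow_Suc: "fpow x (Suc k) = fpow x k * (x + bb (Suc k) + bet * x * bb (Suc k))"
  unfolding fpow_def oplus_def by simp

lemma b_poly_reverse_eval: "(\<Sum>l\<le>k. fps_nth (b_poly k) l * x ^ (k - l)) = fpow x k"
proof (induct k)
  case 0 then show ?case by (simp add: b_poly_def fpow_def)
next
  case (Suc k)
  define b where "b = bb (Suc k)"
  define F where "F = b_poly k"
  have nth: "fps_nth (b_poly (Suc k)) l = (1 + bet * b) * fps_nth F l + b * (if l = 0 then 0 else fps_nth F (l - 1))" for l
    unfolding b_poly_Suc b_def F_def by (simp add: algebra_simps)
  have Fz: "fps_nth F (Suc k) = 0" unfolding F_def by (rule b_poly_nth_eq_0) simp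
  have "(\<Sum>l\<le>Suc k. fps_nth (b_poly (Suc k)) l * x ^ (Suc k - l))
      = (1 + bet * b) * (\<Sum>l\<le>Suc k. fps_nth F l * x ^ (Suc k - l))
        + b * (\<Sum>l\<le>Suc k. (if l = 0 then 0 else fps_nth F (l - 1)) * x ^ (Suc k - l))"
    by (simp only: nth distrib_right sum.distrib sum_distrib_left mult.assoc)
  also have "(\<Sum>l\<le>Suc k. fps_nth F l * x ^ (Suc k - l)) = x * (\<Sum>l\<le>k. fps_nth F l * x ^ (k - l))"
    by (simp add: Fz sum_distrib_left Suc_diff_le algebra_simps)
  also have "(\<Sum>l\<le>Suc k. (if l = 0 then 0 else fps_nth F (l - 1)) * x ^ (Suc k - l)) = (\<Sum>l\<le>k. fps_nth F l * x ^ (k - l))"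
    by (subst sum.atMost_Suc_shift) simp
  finally show ?case
    using Suc unfolding F_def b_def fpow_Suc by (simp add: algebra_simps)
qed

lemma order_grows_nth_mult:
  "order_grows K1 (fps_nth P) \<Longrightarrow> order_grows K2 (fps_nth Q) \<Longrightarrow>
    order_grows (K1 + K2) (fps_nth (P * Q :: 'a::comm_ring_1 fps fps))"
  unfolding order_grows_def fps_mult_nth
proof (intro allI fps_order_ge_sum)
  fix n :: nat and i assume P: "\<forall>n. fps_order_ge (int n - K1) (fps_nth P n)" and Q: "\<forall>n. fps_order_ge (int n - K2) (fps_nth Q n)"
    and i: "i \<in> {0..n}"
  show "fps_order_ge (int n - (K1 + K2)) (fps_nth P i * fps_nth Q (n - i))"
    using fps_order_ge_mult[OF P[rule_format, of i] Q[rule_format, of "n - i"]] i by (simp add: of_nat_diff algebra_simps)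
qed

lemma order_grows_nth_const: "order_grows 0 (fps_nth (fps_const (c :: 'a::comm_ring_1 fps)))"
  unfolding order_grows_def by (auto intro: fps_order_ge_nonpos)

lemma order_grows_nth_prod:
  assumes "finite S" "\<And>i. i \<in> S \<Longrightarrow> order_grows K (fps_nth (f i))" "0 \<le> K"
  shows "order_grows (int (card S) * K) (fps_nth (prod f S :: 'a::comm_ring_1 fps fps))"
  using assms
proof (induct S rule: finite_induct)
  case empty then show ?case by (auto simp: order_grows_def fps_order_ge_nonpos)
next
  case (insert x F)
  then show ?case
    using order_grows_nth_mult[of K "f x" "int (card F) * K" "prod f F"] by (simp add: algebra_simps)
qed


lemma order_grows_nth_linear:
  "order_grows 1 (fps_nth (1 + (fps_X + fps_const c) * fps_const b :: 'a::comm_ring_1 fps fps))"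
  unfolding order_grows_def
proof
  fix n
  show "fps_order_ge (int n - 1) (fps_nth (1 + (fps_X + fps_const c) * fps_const b) n)"
    by (cases "n \<le> 1") (auto intro: fps_order_ge_nonpos simp: algebra_simps)
qed

lemma order_grows_nth_beta_geom:
  "order_grows 0 (fps_nth (fps_const (1 + bet * xx i) * geom_fps (xx i)))"
proof -
  have "order_grows 0 (fps_nth (geom_fps (xx i)))"
    unfolding order_grows_def geom_fps_def using fps_order_ge_power[OF fps_order_ge_xx] by simp
  then show ?thesis
    using order_grows_nth_mult[OF order_grows_nth_const] by fastforce
qed

lemma order_grows_nth_geom_prod:
  "order_grows 0 (fps_nth (\<Prod>i=1..d. fps_const (1 + bet * xx i) * geom_fps (xx i)))"
proof -
  have "order_grows (int (card {1..d}) * 0) (fps_nth (\<Prod>i=1..d. fps_const (1 + bet * xx i) * geom_fps (xx i)))"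
    by (rule order_grows_nth_prod) (auto intro: order_grows_nth_beta_geom)
  then show ?thesis by simp
qed

lemma order_grows_nth_b_poly: "order_grows (int k) (fps_nth (b_poly k))"
proof -
  have "order_grows (int (card {1..k}) * 1) (fps_nth (b_poly k))"
    unfolding b_poly_def by (rule order_grows_nth_prod) (auto intro: order_grows_nth_linear)
  then show ?thesis by simp
qed

lemma order_grows_nth_genP: "order_grows (int k) (fps_nth (genP d k))"
  using order_grows_nth_mult[OF order_grows_nth_geom_prod order_grows_nth_b_poly]
  unfolding genP_factors by simp


section \<open>Clearing the poles\<close>

lemma coeffU_mult_sum:
  assumes "\<And>r. d \<le> r \<Longrightarrow> fps_nth Q r = 0"
  shows "(\<Sum>c<d. coeffU P (int K - int (d - 1 - c)) * fps_nth Q (d - 1 - c)) = fps_nth (P * Q) K"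
proof -
  have "(\<Sum>c<d. coeffU P (int K - int (d - 1 - c)) * fps_nth Q (d - 1 - c))
      = (\<Sum>c<d. coeffU P (int K - int (d - Suc c)) * fps_nth Q (d - Suc c))" by simp
  also have "\<dots> = (\<Sum>r<d. coeffU P (int K - int r) * fps_nth Q r)"
    by (rule sum.nat_diff_reindex)
  also have "\<dots> = (\<Sum>r<d + K + 1. coeffU P (int K - int r) * fps_nth Q r)"
    by (rule sum.mono_neutral_left) (use assms in auto)
  also have "\<dots> = (\<Sum>r<K + 1. coeffU P (int K - int r) * fps_nth Q r)"
    by (rule sum.mono_neutral_right) (auto simp: coeffU_def)
  also have "\<dots> = (\<Sum>r=0..K. fps_nth Q r * fps_nth P (K - r))"
  proof (rule sum.cong)
    show "{..<K + 1} = {0..K}" by auto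
  next
    fix r assume "r \<in> {0..K}"
    then have e: "int K - int r = int (K - r)" by simp
    show "coeffU P (int K - int r) * fps_nth Q r = fps_nth Q r * fps_nth P (K - r)"
      unfolding e coeffU_def by (simp only: nat_int mult.commute) simp
  qed
  also have "\<dots> = fps_nth (P * Q) K"
    by (subst mult.commute) (simp add: fps_mult_nth)
  finally show ?thesis .
qed

lemma order_grows_power_series:
  "fps_order_ge 1 y \<Longrightarrow> order_grows 0 (\<lambda>n. c n * y ^ n :: 'a::comm_ring_1 fps)"
  unfolding order_grows_def using fps_order_ge_power[of 1 y] by (auto intro: fps_order_ge_mult_left)

lemma power_mult_gbin_series:
  assumes y: "fps_order_ge 1 y"
  shows "(1 + y) ^ m * suminf (\<lambda>n. of_int (gbin (- int m) n) * (y :: ser) ^ n) = 1"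
proof -
  have "(1 + y) ^ m = (\<Sum>n\<le>m. of_nat (m choose n) * y ^ n)"
    by (subst add.commute) (simp add: binomial_ring)
  also have "\<dots> = (\<Sum>n<m + 1. of_int (gbin (int m) n) * y ^ n)"
    by (intro sum.cong) (auto simp: gbin_def)
  also have "\<dots> = suminf (\<lambda>n. of_int (gbin (int m) n) * y ^ n)"
    by (rule suminf_eq_sum_lessThan[symmetric]) (simp add: gbin_def binomial_eq_0)
  finally have e: "(1 + y) ^ m = suminf (\<lambda>n. of_int (gbin (int m) n) * y ^ n)" .
  have "(1 + y) ^ m * suminf (\<lambda>n. of_int (gbin (- int m) n) * y ^ n)
     = suminf (\<lambda>n. \<Sum>s\<le>n. of_int (gbin (int m) s) * y ^ s * (of_int (gbin (- int m) (n - s)) * y ^ (n - s)))"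
    unfolding e by (rule suminf_fps_cauchy[OF order_grows_power_series[OF y] order_grows_power_series[OF y]])
  also have "\<dots> = suminf (\<lambda>n. of_int (gbin (int m + - int m) n) * y ^ n)"
  proof (intro arg_cong[where f=suminf] ext)
    fix n
    have "(\<Sum>s\<le>n. of_int (gbin (int m) s) * y ^ s * (of_int (gbin (- int m) (n - s)) * y ^ (n - s)))
        = (\<Sum>s\<le>n. of_int (gbin (int m) s * gbin (- int m) (n - s)) * y ^ n)"
      by (intro sum.cong refl) (auto simp: power_add[symmetric] algebra_simps)
    also have "\<dots> = of_int (\<Sum>s\<le>n. gbin (int m) s * gbin (- int m) (n - s)) * y ^ n"
      by (simp add: sum_distrib_right)
    also have "\<dots> = of_int (gbin (int m + - int m) n) * y ^ n"
      by (simp only: gbin_add)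
    finally show "(\<Sum>s\<le>n. of_int (gbin (int m) s) * y ^ s * (of_int (gbin (- int m) (n - s)) * y ^ (n - s)))
        = of_int (gbin (int m + - int m) n) * y ^ n" .
  qed
  also have "\<dots> = (\<Sum>n<1. of_int (gbin 0 n) * y ^ n)"
    by (subst suminf_eq_sum_lessThan[of 1]) (auto simp: gbin_0_left)
  also have "\<dots> = 1" by simp
  finally show ?thesis .
qed

lemma genP_mult_omit_poly_nth:
  assumes p: "p \<in> {1..d}"
  shows "fps_nth (genP d k * omit_poly d p) (k + n) = beta_prod d * (xx p ^ n * fpow (xx p) k)"
proof -
  have "fps_nth (genP d k * omit_poly d p) (k + n) = beta_prod d * fps_nth (geom_fps (xx p) * b_poly k) (k + n)"
    unfolding genP_mult_omit_poly[OF p] mult.assoc by simp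
  also have "fps_nth (geom_fps (xx p) * b_poly k) (k + n) = xx p ^ n * fpow (xx p) k"
    using geom_fps_mult_nth[of k "b_poly k" "xx p" n] b_poly_nth_eq_0 b_poly_reverse_eval by simp
  finally show ?thesis .
qed

lemma twisted_coeff_row_sum:
  assumes p: "p \<in> {1..d}"
  shows "(\<Sum>c<d. twisted_coeff (genP d k) a (int k - int (d - 1 - c)) * (w * fps_nth (omit_poly d p) (d - 1 - c)))
       = w * beta_prod d * fpow (xx p) k * suminf (\<lambda>n. of_int (gbin a n) * (bet * xx p) ^ n)"
proof -
  define P where "P = genP d k"
  define Q where "Q = omit_poly d p"
  define x where "x = xx p"
  define N where "N c = int k - int (d - 1 - c)" for c
  define f where "f c n = of_int (gbin a n) * bet ^ n * coeffU P (N c + int n) * (w * fps_nth Q (d - 1 - c))" for c n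
  have P: "order_grows (int k) (fps_nth P)" unfolding P_def by (rule order_grows_nth_genP)
  have cv: "order_grows (int d) (f c)" for c
    unfolding f_def
    by (rule order_grows_mult_right, rule order_grows_mono[OF order_grows_coeffU_shift[OF P]]) (simp add: N_def)
  have "(\<Sum>c<d. twisted_coeff P a (N c) * (w * fps_nth Q (d - 1 - c))) = (\<Sum>c<d. suminf (f c))"
    unfolding twisted_coeff_def f_def by (intro sum.cong refl suminf_fps_mult_right[OF order_grows_coeffU_shift[OF P]])
  also have "\<dots> = suminf (\<lambda>n. \<Sum>c<d. f c n)"
    by (rule suminf_fps_sum[symmetric]) (use cv in auto)
  also have "\<dots> = suminf (\<lambda>n. of_int (gbin a n) * (bet * x) ^ n * (w * beta_prod d * fpow x k))"
  proof (intro arg_cong[where f=suminf] ext)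
    fix n
    have "(\<Sum>c<d. f c n) = of_int (gbin a n) * bet ^ n * w *
            (\<Sum>c<d. coeffU P (int (k + n) - int (d - 1 - c)) * fps_nth Q (d - 1 - c))"
      unfolding f_def N_def by (simp add: sum_distrib_left algebra_simps)
    also have "\<dots> = of_int (gbin a n) * bet ^ n * w * fps_nth (P * Q) (k + n)"
      by (subst coeffU_mult_sum) (use omit_poly_nth_eq_0[OF p] in \<open>auto simp: Q_def\<close>)
    also have "\<dots> = of_int (gbin a n) * (bet * x) ^ n * (w * beta_prod d * fpow x k)"
      unfolding P_def Q_def x_def genP_mult_omit_poly_nth[OF p] by (simp add: power_mult_distrib algebra_simps)
    finally show "(\<Sum>c<d. f c n) = of_int (gbin a n) * (bet * x) ^ n * (w * beta_prod d * fpow x k)" .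
  qed
  also have "\<dots> = suminf (\<lambda>n. of_int (gbin a n) * (bet * x) ^ n) * (w * beta_prod d * fpow x k)"
    by (rule suminf_fps_mult_right[OF order_grows_power_series, symmetric]) (simp add: x_def fps_order_ge_mult_left fps_order_ge_xx)
  finally show ?thesis unfolding P_def Q_def x_def N_def by (simp add: algebra_simps)
qed


section \<open>Determinants\<close>

lemma mult_mat_nth_sum:
  assumes "A \<in> carrier_mat n k" "B \<in> carrier_mat k m" "r < n" "p < m"
  shows "(A * B) $$ (r, p) = (\<Sum>c<k. A $$ (r, c) * B $$ (c, p))"
  using assms by (simp add: scalar_prod_def atLeast0LessThan)

lemma det_mat_upper_triangular:
  assumes "\<And>r c. c < r \<Longrightarrow> r < n \<Longrightarrow> f (r, c) = 0"
  shows "det (mat n n f) = (\<Prod>r<n. f (r, r))"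
  by (subst det_upper_triangular[of _ n])
     (use assms in \<open>auto simp: upper_triangular_def prod_list_diag_prod atLeast0LessThan\<close>)

lemma det_mat_lower_triangular:
  assumes "\<And>r c. r < c \<Longrightarrow> c < n \<Longrightarrow> f (r, c) = 0"
  shows "det (mat n n f) = (\<Prod>r<n. f (r, r))"
  by (subst det_lower_triangular[of n]) (use assms in \<open>auto simp: prod_list_diag_prod atLeast0LessThan\<close>)

lemma mat_scale_columns:
  fixes f :: "nat \<Rightarrow> nat \<Rightarrow> 'a::comm_ring_1"
  shows "mat n n (\<lambda>(r, p). f r p * z p) = mat n n (\<lambda>(r, p). f r p) * mat n n (\<lambda>(r, c). if r = c then z r else 0)"
    (is "?A = ?F * ?Z")
proof (rule eq_matI)
  fix r p assume "r < dim_row (?F * ?Z)" "p < dim_col (?F * ?Z)"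
  then have r: "r < n" and p: "p < n" by auto
  have "(?F * ?Z) $$ (r, p) = (\<Sum>c<n. ?F $$ (r, c) * ?Z $$ (c, p))"
    by (rule mult_mat_nth_sum[OF _ _ r p]) auto
  also have "\<dots> = (\<Sum>c<n. if c = p then f r c * z c else 0)"
    by (intro sum.cong refl) (simp add: r p)
  finally show "?A $$ (r, p) = (?F * ?Z) $$ (r, p)"
    using r p by simp
qed auto

definition vandermonde_mat :: "nat \<Rightarrow> (nat \<Rightarrow> 'a::comm_ring_1) \<Rightarrow> 'a mat" where
  "vandermonde_mat n y = mat n n (\<lambda>(r, p). y p ^ (n - 1 - r))"

lemma vandermonde_mat_carrier [simp]: "vandermonde_mat n y \<in> carrier_mat n n"
  by (simp add: vandermonde_mat_def)

lemma index_vandermonde_mat [simp]: "r < n \<Longrightarrow> p < n \<Longrightarrow> vandermonde_mat n y $$ (r, p) = y p ^ (n - 1 - r)"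
  by (simp add: vandermonde_mat_def)

(* subtract y_n times row r + 1 from row r, for every r < n *)
lemma vandermonde_row_elim:
  fixes y :: "nat \<Rightarrow> 'a::comm_ring_1"
  shows "mat (Suc n) (Suc n) (\<lambda>(r, c). if c = r then 1 else if c = Suc r then - y n else 0) * vandermonde_mat (Suc n) y
    = four_block_mat (mat n n (\<lambda>(r, p). y p ^ (n - 1 - r) * (y p - y n))) (0\<^sub>m n 1) (mat 1 n (\<lambda>_. 1)) (mat 1 1 (\<lambda>_. 1))"
    (is "?L * ?V = ?R")
proof (rule eq_matI)
  fix r p assume "r < dim_row ?R" "p < dim_col ?R"
  then have r: "r < Suc n" and p: "p < Suc n" by simp_all
  have "(?L * ?V) $$ (r, p) = (\<Sum>c<Suc n. ?L $$ (r, c) * ?V $$ (c, p))"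
    by (rule mult_mat_nth_sum[OF _ _ r p]) auto
  also have "\<dots> = (\<Sum>c<Suc n. (if c = r then 1 else if c = Suc r then - y n else 0) * y p ^ (n - c))"
    by (intro sum.cong refl) (simp add: r p)
  also have "\<dots> = (\<Sum>c<Suc n. if c = r then y p ^ (n - c) else 0) + (\<Sum>c<Suc n. if c = Suc r then - y n * y p ^ (n - c) else 0)"
    by (subst sum.distrib[symmetric]) (intro sum.cong refl, auto)
  also have "\<dots> = y p ^ (n - r) - (if r < n then y n * y p ^ (n - Suc r) else 0)"
    using r by (auto simp: sum.delta' less_Suc_eq)
  also have "\<dots> = ?R $$ (r, p)"
  proof (cases "r < n")
    case True
    then have e: "y p ^ (n - r) = y p * y p ^ (n - 1 - r)" "n - Suc r = n - 1 - r"
      by (auto simp flip: power_Suc simp: Suc_diff_Suc)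
    show ?thesis
      unfolding e using True p by (cases "p = n") (auto simp: algebra_simps)
  qed (use r p in auto)
  finally show "(?L * ?V) $$ (r, p) = ?R $$ (r, p)" .
qed (auto simp: vandermonde_mat_def)

lemma det_vandermonde_mat:
  fixes y :: "nat \<Rightarrow> 'a::comm_ring_1"
  shows "det (vandermonde_mat n y) = (\<Prod>q<n. \<Prod>p<q. y p - y q)"
proof (induct n)
  case 0 then show ?case by (simp add: det_def vandermonde_mat_def)
next
  case (Suc n)
  let ?L = "mat (Suc n) (Suc n) (\<lambda>(r, c). if c = r then 1 else if c = Suc r then - y n else (0::'a))"
  have "det (vandermonde_mat (Suc n) y) = det (?L * vandermonde_mat (Suc n) y)"
    by (subst det_mult[of _ "Suc n"]) (auto simp: vandermonde_mat_def det_mat_upper_triangular)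
  also have "\<dots> = det (mat n n (\<lambda>(r, p). y p ^ (n - 1 - r) * (y p - y n)))"
    unfolding vandermonde_row_elim
    by (subst det_four_block_mat_upper_right_zero_col[of _ n]) (auto simp: det_single)
  also have "\<dots> = det (vandermonde_mat n y) * (\<Prod>p<n. y p - y n)"
    unfolding mat_scale_columns[of n "\<lambda>r p. y p ^ (n - 1 - r)"]
    by (subst det_mult[of _ n]) (auto simp: vandermonde_mat_def det_mat_upper_triangular)
  finally show ?case using Suc by simp
qed


section \<open>Nonvanishing factors\<close>

lemma vdm_eq_det_vandermonde_mat: "vdm d = det (vandermonde_mat d (\<lambda>p. xx (Suc p)))"
proof -
  have "det (vandermonde_mat d (\<lambda>p. xx (Suc p)))
      = (\<Prod>(q, p)\<in>Sigma {..<d} (\<lambda>q. {..<q}). xx (Suc p) - xx (Suc q))"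
    unfolding det_vandermonde_mat by (rule prod.Sigma) auto
  also have "\<dots> = vdm d"
    unfolding vdm_def
    by (rule prod.reindex_bij_witness[where j = "\<lambda>(q, p). (Suc p, Suc q)" and i = "\<lambda>(i, j). (j - 1, i - 1)"]) auto
  finally show ?thesis ..
qed

lemma xx_diff_neq_0:
  assumes "i \<noteq> j"
  shows "xx i - xx j \<noteq> 0"
proof
  let ?m = "Poly_Mapping.single (XV i) (1::nat)"
  assume "xx i - xx j = 0"
  then have "Poly_Mapping.lookup (fps_nth (xx i - xx j) 1) ?m = 0" by simp
  moreover have "?m \<noteq> Poly_Mapping.single (XV j) 1"
    using assms by (metis lookup_single_eq lookup_single_not_eq var.inject(1) zero_neq_one)
  ultimately show False
    by (simp add: xx_def indet_def lookup_minus lookup_single_not_eq)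
qed

lemma vdm_neq_0: "vdm d \<noteq> 0"
proof -
  have "finite {(i, j). 1 \<le> i \<and> i < j \<and> j \<le> d}"
    by (rule finite_subset[of _ "{..d} \<times> {..d}"]) auto
  then show ?thesis
    unfolding vdm_def using xx_diff_neq_0 by (auto simp: prod_zero_iff)
qed

lemma beta_prod_neq_0: "beta_prod d \<noteq> 0"
proof -
  have "fps_nth (beta_prod d) 0 = 1"
    unfolding beta_prod_def fps_nth_prod_0 by (simp add: xx_def)
  then show ?thesis by (metis fps_zero_nth zero_neq_one)
qed

lemma Gfact_eqI:
  assumes "vdm d * g = galt d lam"
  shows "Gfact d lam = g"
  unfolding Gfact_def
proof (rule the_equality)
  fix g' assume "vdm d * g' = galt d lam"
  then show "g' = g" using assms vdm_neq_0 by (metis mult_left_cancel)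
qed (rule assms)


section \<open>Evaluation at u = -beta\<close>

definition eval_neg_beta :: "ser fps \<Rightarrow> ser" where
  "eval_neg_beta P = suminf (\<lambda>s. (- bet) ^ s * fps_nth P s)"

lemma eval_neg_beta_mult:
  assumes "order_grows K1 (fps_nth P)" "order_grows K2 (fps_nth Q)"
  shows "eval_neg_beta (P * Q) = eval_neg_beta P * eval_neg_beta Q"
proof -
  have "eval_neg_beta P * eval_neg_beta Q
      = suminf (\<lambda>n. \<Sum>s\<le>n. (- bet) ^ s * fps_nth P s * ((- bet) ^ (n - s) * fps_nth Q (n - s)))"
    unfolding eval_neg_beta_def
    by (rule suminf_fps_cauchy[OF order_grows_mult_left[OF assms(1)] order_grows_mult_left[OF assms(2)]])
  also have "\<dots> = eval_neg_beta (P * Q)"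
    unfolding eval_neg_beta_def fps_mult_nth sum_distrib_left atLeast0AtMost
    by (intro arg_cong[where f = suminf] ext sum.cong refl) (auto simp: algebra_simps simp flip: power_add)
  finally show ?thesis ..
qed

lemma eval_neg_beta_prod:
  assumes "finite S" "\<And>i. i \<in> S \<Longrightarrow> order_grows K (fps_nth (f i))" "0 \<le> K"
  shows "eval_neg_beta (prod f S) = (\<Prod>i\<in>S. eval_neg_beta (f i))"
  using assms
proof (induct S rule: finite_induct)
  case empty
  have "eval_neg_beta 1 = (\<Sum>s<1. (- bet) ^ s * fps_nth (1::ser fps) s)"
    unfolding eval_neg_beta_def by (rule suminf_eq_sum_lessThan) simp
  then show ?case by simp
next
  case (insert x F)
  then have "eval_neg_beta (f x * prod f F) = eval_neg_beta (f x) * eval_neg_beta (prod f F)"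
    by (intro eval_neg_beta_mult[of K _ "int (card F) * K"] order_grows_nth_prod) auto
  then show ?case using insert by simp
qed

lemma eval_neg_beta_beta_geom: "eval_neg_beta (fps_const (1 + bet * xx q) * geom_fps (xx q)) = 1"
proof -
  have y: "fps_order_ge 1 (bet * xx q)"
    by (rule fps_order_ge_mult_left[OF fps_order_ge_xx])
  have summand: "(- bet) ^ s * fps_nth (fps_const (1 + bet * xx q) * geom_fps (xx q)) s
      = (1 + bet * xx q) * (of_int (gbin (- int 1) s) * (bet * xx q) ^ s)" for s
    by (simp add: geom_fps_def gbin_minus_1 power_minus[of bet] power_mult_distrib)
  have "eval_neg_beta (fps_const (1 + bet * xx q) * geom_fps (xx q))
      = suminf (\<lambda>s. (1 + bet * xx q) * (of_int (gbin (- int 1) s) * (bet * xx q) ^ s))"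
    unfolding eval_neg_beta_def summand ..
  also have "\<dots> = (1 + bet * xx q) * suminf (\<lambda>s. of_int (gbin (- int 1) s) * (bet * xx q) ^ s)"
    by (rule suminf_fps_mult_left[OF order_grows_power_series[OF y], symmetric])
  also have "\<dots> = 1"
    using power_mult_gbin_series[OF y, of 1] by simp
  finally show ?thesis .
qed

lemma eval_neg_beta_linear: "eval_neg_beta (1 + (fps_X + fps_const bet) * fps_const b) = 1"
proof -
  have "eval_neg_beta (1 + (fps_X + fps_const bet) * fps_const b)
      = (\<Sum>s<2. (- bet) ^ s * fps_nth (1 + (fps_X + fps_const bet) * fps_const b) s)"
    unfolding eval_neg_beta_def by (rule suminf_eq_sum_lessThan) (simp add: algebra_simps)
  also have "\<dots> = 1" by (simp add: numeral_2_eq_2 algebra_simps)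
  finally show ?thesis .
qed

lemma Gmk_0: "Gmk d k 0 = 1"
proof -
  have "Gmk d k 0 = eval_neg_beta (genP d k)"
    unfolding Gmk_def eval_neg_beta_def coeffU_def by simp
  also have "\<dots> = eval_neg_beta (\<Prod>i=1..d. fps_const (1 + bet * xx i) * geom_fps (xx i)) * eval_neg_beta (b_poly k)"
    unfolding genP_factors by (rule eval_neg_beta_mult[OF order_grows_nth_geom_prod order_grows_nth_b_poly])
  also have "eval_neg_beta (\<Prod>i=1..d. fps_const (1 + bet * xx i) * geom_fps (xx i)) = 1"
    by (subst eval_neg_beta_prod[where K = 0]) (auto intro: order_grows_nth_beta_geom simp: eval_neg_beta_beta_geom)
  also have "eval_neg_beta (b_poly k) = 1"
    unfolding b_poly_def
    by (subst eval_neg_beta_prod[where K = 1]) (auto intro: order_grows_nth_linear simp: eval_neg_beta_linear)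
  finally show ?thesis by simp
qed


section \<open>The matrix identities\<close>

lemma det_mat_scale_columns:
  fixes f :: "nat \<Rightarrow> nat \<Rightarrow> 'a::comm_ring_1"
  shows "det (mat n n (\<lambda>(r, p). f r p * z p)) = det (mat n n (\<lambda>(r, p). f r p)) * (\<Prod>p<n. z p)"
  unfolding mat_scale_columns by (subst det_mult[of _ n]) (auto simp: det_mat_upper_triangular)

definition grothendieck_mat :: "nat \<Rightarrow> (nat \<Rightarrow> nat) \<Rightarrow> (nat \<Rightarrow> nat \<Rightarrow> int) \<Rightarrow> ser mat" where
  "grothendieck_mat d lam e = mat d d (\<lambda>(r, c). let i = r + 1; j = c + 1 in
     suminf (\<lambda>s. of_int (gbin (e i j) s) * bet ^ s * Gmk d (lam i + d - i) (int (lam i) + int j - int i + int s)))"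

definition cofactor_mat :: "nat \<Rightarrow> ser mat" where
  "cofactor_mat d = mat d d (\<lambda>(c, p). (1 + bet * xx (Suc p)) ^ d * fps_nth (omit_poly d (Suc p)) (d - 1 - c))"

definition toeplitz_mat :: "nat \<Rightarrow> ser mat" where
  "toeplitz_mat d = mat d d (\<lambda>(r, c). coeffU (genP d 0) (int c - int r))"

definition binom_mat :: "nat \<Rightarrow> ser mat" where
  "binom_mat d = mat d d (\<lambda>(c', c). if c \<le> c' then of_int (gbin (int d - int (c + 1)) (c' - c)) * bet ^ (c' - c) else 0)"

lemma matrices_carrier [simp]:
  "grothendieck_mat d lam e \<in> carrier_mat d d" "cofactor_mat d \<in> carrier_mat d d"
  "toeplitz_mat d \<in> carrier_mat d d" "binom_mat d \<in> carrier_mat d d"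
  by (simp_all add: grothendieck_mat_def cofactor_mat_def toeplitz_mat_def binom_mat_def)

lemma matrices_dim [simp]:
  "dim_row (grothendieck_mat d lam e) = d" "dim_col (grothendieck_mat d lam e) = d"
  "dim_row (cofactor_mat d) = d" "dim_col (cofactor_mat d) = d"
  "dim_row (toeplitz_mat d) = d" "dim_col (toeplitz_mat d) = d"
  "dim_row (binom_mat d) = d" "dim_col (binom_mat d) = d"
  by (simp_all add: grothendieck_mat_def cofactor_mat_def toeplitz_mat_def binom_mat_def)

lemma grothendieck_mat_entry:
  assumes r: "r < d" and c: "c < d"
  shows "grothendieck_mat d lam e $$ (r, c)
    = twisted_coeff (genP d (lam (r + 1) + d - (r + 1))) (e (r + 1) (c + 1) - 1)
        (int (lam (r + 1) + d - (r + 1)) - int (d - 1 - c))"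
proof -
  have "int (lam (r + 1)) + int (c + 1) - int (r + 1) = int (lam (r + 1) + d - (r + 1)) - int (d - 1 - c)"
    using r c by (simp add: of_nat_diff)
  then show ?thesis
    using r c unfolding grothendieck_mat_def Gmk_eq_twisted_coeff
    by (simp add: twisted_coeff_gbin_sum[OF order_grows_nth_genP])
qed

lemma grothendieck_mat_mult_cofactor_mat:
  "grothendieck_mat d lam (\<lambda>i j. int i - int d) * cofactor_mat d
    = beta_prod d \<cdot>\<^sub>m mat d d (\<lambda>(r, c). fpow (xx (c + 1)) (lam (r + 1) + d - (r + 1)) * (1 + bet * xx (c + 1)) ^ r)"
    (is "?M * ?A = beta_prod d \<cdot>\<^sub>m ?G")
proof (rule eq_matI)
  fix r p assume "r < dim_row (beta_prod d \<cdot>\<^sub>m ?G)" "p < dim_col (beta_prod d \<cdot>\<^sub>m ?G)"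
  then have r: "r < d" and p: "p < d" by auto
  define k where "k = lam (r + 1) + d - (r + 1)"
  define x where "x = xx (Suc p)"
  have "(?M * ?A) $$ (r, p) = (\<Sum>c<d. ?M $$ (r, c) * ?A $$ (c, p))"
    by (rule mult_mat_nth_sum[OF _ _ r p]) auto
  also have "\<dots> = (\<Sum>c<d. twisted_coeff (genP d k) (- int (d - r)) (int k - int (d - 1 - c))
      * ((1 + bet * x) ^ d * fps_nth (omit_poly d (Suc p)) (d - 1 - c)))"
  proof (intro sum.cong refl)
    fix c assume "c \<in> {..<d}"
    then have c: "c < d" by simp
    have a: "int (r + 1) - int d - 1 = - int (d - r)" using r by simp
    show "?M $$ (r, c) * ?A $$ (c, p) = twisted_coeff (genP d k) (- int (d - r)) (int k - int (d - 1 - c))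
      * ((1 + bet * x) ^ d * fps_nth (omit_poly d (Suc p)) (d - 1 - c))"
      unfolding grothendieck_mat_entry[OF r c] a k_def[symmetric] using c p by (simp add: cofactor_mat_def x_def)
  qed
  also have "\<dots> = (1 + bet * x) ^ d * beta_prod d * fpow x k * suminf (\<lambda>n. of_int (gbin (- int (d - r)) n) * (bet * x) ^ n)"
    unfolding x_def by (rule twisted_coeff_row_sum) (use p in auto)
  also have "\<dots> = beta_prod d * (fpow x k * (1 + bet * x) ^ r)
      * ((1 + bet * x) ^ (d - r) * suminf (\<lambda>n. of_int (gbin (- int (d - r)) n) * (bet * x) ^ n))"
    using r by (simp add: mult_ac flip: power_add)
  also have "\<dots> = beta_prod d * (fpow x k * (1 + bet * x) ^ r)"
    by (subst power_mult_gbin_series) (simp_all add: x_def fps_order_ge_mult_left fps_order_ge_xx)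
  finally show "(?M * ?A) $$ (r, p) = (beta_prod d \<cdot>\<^sub>m ?G) $$ (r, p)"
    using r p by (simp add: k_def x_def)
qed auto

lemma toeplitz_mat_mult_cofactor_mat:
  "toeplitz_mat d * cofactor_mat d
    = beta_prod d \<cdot>\<^sub>m mat d d (\<lambda>(r, p). xx (Suc p) ^ (d - 1 - r) * (1 + bet * xx (Suc p)) ^ d)"
    (is "?H * ?A = beta_prod d \<cdot>\<^sub>m ?W")
proof (rule eq_matI)
  fix r p assume "r < dim_row (beta_prod d \<cdot>\<^sub>m ?W)" "p < dim_col (beta_prod d \<cdot>\<^sub>m ?W)"
  then have r: "r < d" and p: "p < d" by auto
  define x where "x = xx (Suc p)"
  have "(?H * ?A) $$ (r, p) = (1 + bet * x) ^ d * (\<Sum>c<d. coeffU (genP d 0) (int (d - 1 - r) - int (d - 1 - c))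
      * fps_nth (omit_poly d (Suc p)) (d - 1 - c))"
    using r p unfolding sum_distrib_left
    by (subst mult_mat_nth_sum[of _ d d], simp_all, intro sum.cong refl)
       (auto simp: toeplitz_mat_def cofactor_mat_def x_def of_nat_diff)
  also have "\<dots> = (1 + bet * x) ^ d * fps_nth (genP d 0 * omit_poly d (Suc p)) (d - 1 - r)"
    using p by (subst coeffU_mult_sum) (auto intro: omit_poly_nth_eq_0)
  also have "\<dots> = (beta_prod d \<cdot>\<^sub>m ?W) $$ (r, p)"
    using r p genP_mult_omit_poly_nth[of "Suc p" d 0 "d - 1 - r"] by (simp add: x_def fpow_def)
  finally show "(?H * ?A) $$ (r, p) = (beta_prod d \<cdot>\<^sub>m ?W) $$ (r, p)" .
qed auto

lemma det_toeplitz_mat: "det (toeplitz_mat d) = beta_prod d ^ d"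
proof -
  have "fps_nth (genP d 0) 0 = beta_prod d"
    unfolding genP_eq_beta_prod by (simp add: b_poly_def fps_nth_prod_0 geom_fps_def)
  then show ?thesis
    unfolding toeplitz_mat_def by (subst det_mat_upper_triangular) (auto simp: coeffU_def)
qed

lemma det_cofactor_mat: "det (cofactor_mat d) = vdm d * beta_prod d ^ d"
proof -
  have "det (mat d d (\<lambda>(r, p). xx (Suc p) ^ (d - 1 - r) * (1 + bet * xx (Suc p)) ^ d))
      = det (vandermonde_mat d (\<lambda>p. xx (Suc p))) * (\<Prod>p<d. (1 + bet * xx (Suc p)) ^ d)"
    unfolding vandermonde_mat_def by (rule det_mat_scale_columns)
  also have "\<dots> = vdm d * beta_prod d ^ d"
    unfolding vdm_eq_det_vandermonde_mat beta_prod_def prod_power_distrib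
    by (simp add: prod.atLeast1_atMost_eq)
  finally have "det (toeplitz_mat d * cofactor_mat d) = beta_prod d ^ d * (vdm d * beta_prod d ^ d)"
    unfolding toeplitz_mat_mult_cofactor_mat by simp
  then have "beta_prod d ^ d * det (cofactor_mat d) = beta_prod d ^ d * (vdm d * beta_prod d ^ d)"
    by (simp add: det_mult[of "toeplitz_mat d" d "cofactor_mat d"] det_toeplitz_mat)
  then show ?thesis using beta_prod_neq_0 by simp
qed

lemma det_binom_mat: "det (binom_mat d) = 1"
  unfolding binom_mat_def by (subst det_mat_lower_triangular) auto

lemma grothendieck_mat_mult_binom_mat:
  "grothendieck_mat d lam (\<lambda>i j. int i - int d) * binom_mat d = grothendieck_mat d lam (\<lambda>i j. int i - int j)"
    (is "?M * ?T = ?M'")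
proof (rule eq_matI)
  fix r c assume "r < dim_row ?M'" "c < dim_col ?M'"
  then have r: "r < d" and c: "c < d" by auto
  define k where "k = lam (r + 1) + d - (r + 1)"
  define a where "a = int (r + 1) - int d - 1"
  define N where "N = int k - int (d - 1 - c)"
  define g where "g s = of_int (gbin (int d - int (c + 1)) s) * bet ^ s * twisted_coeff (genP d k) a (N + int s)" for s
  have "(?M * ?T) $$ (r, c) = (\<Sum>c'<d. ?M $$ (r, c') * ?T $$ (c', c))"
    by (rule mult_mat_nth_sum[OF _ _ r c]) auto
  also have "\<dots> = (\<Sum>c'<d. if c \<le> c' then g (c' - c) else 0)"
  proof (intro sum.cong refl)
    fix c' assume "c' \<in> {..<d}"
    then have c': "c' < d" by simp
    show "?M $$ (r, c') * ?T $$ (c', c) = (if c \<le> c' then g (c' - c) else 0)"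
    proof (cases "c \<le> c'")
      case True
      then have shift: "int k - int (d - 1 - c') = N + int (c' - c)"
        using c' unfolding N_def by (simp add: of_nat_diff)
      show ?thesis
        using True c c' unfolding grothendieck_mat_entry[OF r c'] k_def[symmetric] a_def[symmetric] shift
        by (simp add: binom_mat_def g_def mult_ac)
    qed (use c c' in \<open>simp add: binom_mat_def\<close>)
  qed
  also have "\<dots> = (\<Sum>s<d - c. g s)"
    using c by (subst sum.If_cases) (auto intro!: sum.reindex_bij_witness[of _ "\<lambda>s. c + s" "\<lambda>c'. c' - c"])
  also have "\<dots> = suminf g"
    by (rule suminf_eq_sum_lessThan[symmetric]) (use c in \<open>simp add: g_def gbin_eq_0\<close>)
  also have "\<dots> = twisted_coeff (genP d k) (int d - int (c + 1) + a) N"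
    unfolding g_def by (rule twisted_coeff_gbin_sum[OF order_grows_nth_genP])
  also have "\<dots> = ?M' $$ (r, c)"
    unfolding grothendieck_mat_entry[OF r c] by (simp add: k_def a_def N_def)
  finally show "(?M * ?T) $$ (r, c) = ?M' $$ (r, c)" .
qed auto

lemma Gfact_eq_det_grothendieck_mat_1: "Gfact d lam = det (grothendieck_mat d lam (\<lambda>i j. int i - int d))"
proof (rule Gfact_eqI)
  have "det (grothendieck_mat d lam (\<lambda>i j. int i - int d)) * det (cofactor_mat d) = beta_prod d ^ d * galt d lam"
    using det_mult[of "grothendieck_mat d lam (\<lambda>i j. int i - int d)" d "cofactor_mat d"]
    unfolding grothendieck_mat_mult_cofactor_mat galt_def by simp
  then show "vdm d * det (grothendieck_mat d lam (\<lambda>i j. int i - int d)) = galt d lam"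
    unfolding det_cofactor_mat using beta_prod_neq_0 by (simp add: algebra_simps)
qed

lemma Gfact_eq_det_grothendieck_mat_2: "Gfact d lam = det (grothendieck_mat d lam (\<lambda>i j. int i - int j))"
  using det_mult[of "grothendieck_mat d lam (\<lambda>i j. int i - int d)" d "binom_mat d"]
  unfolding Gfact_eq_det_grothendieck_mat_1 grothendieck_mat_mult_binom_mat det_binom_mat by simp

lemma twisted_coeff_eq_0:
  assumes "0 \<le> a" "N + a < 0"
  shows "twisted_coeff P a N = 0"
proof -
  have "(\<lambda>n. of_int (gbin a n) * bet ^ n * coeffU P (N + int n)) = (\<lambda>n. 0)"
  proof
    fix n show "of_int (gbin a n) * bet ^ n * coeffU P (N + int n) = 0"
      using assms by (cases "int n \<le> a") (simp_all add: coeffU_def gbin_eq_0)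
  qed
  then show ?thesis unfolding twisted_coeff_def by simp
qed

(* the second matrix is upper triangular, with entries Gmk d _ 0 = 1 on the diagonal below the first row *)
lemma Gfact_one_row:
  assumes "d \<ge> 1"
  shows "Gfact d (\<lambda>i. if i = 1 then k else 0) = Gmk d (k + d - 1) (int k)"
proof -
  define lam where "lam = (\<lambda>i::nat. if i = 1 then k else 0)"
  let ?M = "grothendieck_mat d lam (\<lambda>i j. int i - int j)"
  have diagonal: "?M $$ (r, r) = Gmk d (lam (r + 1) + d - (r + 1)) (int (lam (r + 1)))" if "r < d" for r
    using that unfolding grothendieck_mat_def by (simp add: suminf_eq_sum_lessThan[of 1] gbin_0_left)
  have "det ?M = (\<Prod>r<d. ?M $$ (r, r))"
  proof (subst det_upper_triangular[of _ d])
    show "upper_triangular ?M"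
      unfolding upper_triangular_def
    proof (intro allI impI)
      fix r c assume "r < dim_row ?M" "c < r"
      then have "r < d" "c < d" "lam (r + 1) = 0" by (auto simp: lam_def)
      then show "?M $$ (r, c) = 0"
        using \<open>c < r\<close> by (simp add: grothendieck_mat_entry twisted_coeff_eq_0 of_nat_diff)
    qed
  qed (auto simp: prod_list_diag_prod atLeast0LessThan)
  also have "\<dots> = (\<Prod>r<d. Gmk d (lam (r + 1) + d - (r + 1)) (int (lam (r + 1))))"
    by (rule prod.cong) (simp_all add: diagonal)
  also have "\<dots> = Gmk d (k + d - 1) (int k)"
  proof -
    obtain d' where d': "d = Suc d'" using assms by (cases d) auto
    show ?thesis unfolding d' prod.lessThan_Suc_shift by (simp add: lam_def Gmk_0)
  qed
  finally show ?thesis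
    unfolding Gfact_eq_det_grothendieck_mat_2 lam_def .
qed

theorem theorem1p1:
  fixes d :: nat and lam :: "nat \<Rightarrow> nat"
  assumes "d \<ge> 1"
    and "\<forall>i. 1 \<le> i \<and> i < d \<longrightarrow> lam (i+1) \<le> lam i"
  shows "Gfact d lam =
           det (mat d d (\<lambda>(r,c). let i = r+1; j = c+1 in
              suminf (\<lambda>s. of_int (gbin (int i - int d) s) * bet ^ s
                     * Gmk d (lam i + d - i) (int (lam i) + int j - int i + int s))))
       \<and> Gfact d lam =
           det (mat d d (\<lambda>(r,c). let i = r+1; j = c+1 in
              suminf (\<lambda>s. of_int (gbin (int i - int j) s) * bet ^ s
                     * Gmk d (lam i + d - i) (int (lam i) + int j - int i + int s))))
       \<and> (\<forall>k::nat. Gfact d (\<lambda>i. if i = 1 then k else 0) = Gmk d (k + d - 1) (int k))"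
  using Gfact_eq_det_grothendieck_mat_1[of d lam] Gfact_eq_det_grothendieck_mat_2[of d lam]
    Gfact_one_row[OF assms(1)]
  unfolding grothendieck_mat_def by blast

end
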